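(* In the allocation problem described in the context, let $\pi=(\pi_1,\ldots,\pi_n)$ be the agents' preference lists and let $a$ be a Pareto efficient allocation. Then there exist speed functions $\eta_1,\ldots,\eta_n$ such that the extended SG mechanism with these speeds and truthful bids $\pi$ produces exactly the allocation $a$.
   Context: There are $m$ distinct divisible goods; good $j$ is available in amount $q_j>0$. There are $n$ agents; agent $i$ is to receive a total of $r_i>0$, with $\sum_j q_j=\sum_i r_i$. An allocation is a family $a_{ij}\ge 0$ with $\sum_j a_{ij}=r_i$ and $\sum_i a_{ij}=q_j$; $a_{i*}=(a_{i1},\ldots,a_{im})$ is agent $i$'s share. Each agent $i$ has a preference list $\pi_i$, a permutation of the goods ($\pi_i(1)$ most preferred). Agent $i$ prefers $a_{i*}$ to $b_{i*}$, written $a_{i*}>_i b_{i*}$, if the leftmost nonzero coordinate of $(a_{i\pi_i(\ell)}-b_{i\pi_i(\ell)})_{\ell=1}^m$ is positive. An allocation $a$ is Pareto efficient if there is no allocation $b$ such that every agent $i$ has $b_{i*}=a_{i*}$ or $b_{i*}>_i a_{i*}$, and some agent $i$ has $b_{i*}>_i a_{i*}$. A speed function for agent $i$ is a nonnegative integrable function $\eta_i:[0,1]\to\mathbb{R}_{\ge 0}$ with $\int_0^1\eta_i(t)\,dt=r_i$. The extended SG mechanism with speeds $\eta_1,\ldots,\eta_n$: each agent $i$ bids a permutation $\sigma_i$ of the goods; over time $t\in[0,1]$, each agent $i$ receives, at rate $\eta_i(t)$, the good highest in $\sigma_i$ among those not yet exhausted (a good is exhausted when the total amount handed out equals $q_j$;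 several agents may receive a good simultaneously; upon exhaustion, agents receiving it switch to their next non-exhausted good). The resulting allocation records the total amount of each good each agent receives. *)

theory Defs
  imports "HOL-Analysis.Analysis"
begin

text \<open>Agents are indexed by 0..<n, goods by 0..<m. A preference list / bid of an
agent is a permutation p of {..<m}; p 0 is the most preferred good.\<close>

definition is_pref_list :: "nat \<Rightarrow> (nat \<Rightarrow> nat) \<Rightarrow> bool" where
  "is_pref_list m p \<longleftrightarrow> bij_betw p {..<m} {..<m}"

definition is_allocation ::
  "nat \<Rightarrow> nat \<Rightarrow> (nat \<Rightarrow> real) \<Rightarrow> (nat \<Rightarrow> real) \<Rightarrow> (nat \<Rightarrow> nat \<Rightarrow> real) \<Rightarrow> bool" where
  "is_allocation n m q r a \<longleftrightarrow>
     (\<forall>i<n. \<forall>j<m. 0 \<le> a i j) \<and>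
     (\<forall>i<n. (\<Sum>j<m. a i j) = r i) \<and>
     (\<forall>j<m. (\<Sum>i<n. a i j) = q j)"

definition lex_prefers :: "nat \<Rightarrow> (nat \<Rightarrow> nat) \<Rightarrow> (nat \<Rightarrow> real) \<Rightarrow> (nat \<Rightarrow> real) \<Rightarrow> bool" where
  "lex_prefers m p x y \<longleftrightarrow>
     (\<exists>l<m. (\<forall>k<l. x (p k) = y (p k)) \<and> x (p l) > y (p l))"

definition same_share :: "nat \<Rightarrow> (nat \<Rightarrow> real) \<Rightarrow> (nat \<Rightarrow> real) \<Rightarrow> bool" where
  "same_share m x y \<longleftrightarrow> (\<forall>j<m. x j = y j)"

definition pareto_efficient ::
  "nat \<Rightarrow> nat \<Rightarrow> (nat \<Rightarrow> real) \<Rightarrow> (nat \<Rightarrow> real) \<Rightarrow> (nat \<Rightarrow> nat \<Rightarrow> nat)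
     \<Rightarrow> (nat \<Rightarrow> nat \<Rightarrow> real) \<Rightarrow> bool" where
  "pareto_efficient n m q r \<pi> a \<longleftrightarrow>
     is_allocation n m q r a \<and>
     \<not> (\<exists>b. is_allocation n m q r b \<and>
            (\<forall>i<n. same_share m (b i) (a i) \<or> lex_prefers m (\<pi> i) (b i) (a i)) \<and>
            (\<exists>i<n. lex_prefers m (\<pi> i) (b i) (a i)))"

definition speed_function :: "(real \<Rightarrow> real) \<Rightarrow> real \<Rightarrow> bool" where
  "speed_function \<eta> r \<longleftrightarrow>
     (\<forall>t\<in>{0..1}. 0 \<le> \<eta> t) \<and>
     set_integrable lborel {0..1::real} \<eta> \<and>
     set_lebesgue_integral lborel {0..1::real} \<eta> = r"

text \<open>A run is described by exhaustion times tau j of the goods.\<close>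

definition sg_current :: "nat \<Rightarrow> (nat \<Rightarrow> nat \<Rightarrow> nat) \<Rightarrow> (nat \<Rightarrow> real) \<Rightarrow> nat \<Rightarrow> real \<Rightarrow> nat option" where
  "sg_current m \<sigma> \<tau> i t =
     (if \<exists>k<m. t < \<tau> (\<sigma> i k)
      then Some (\<sigma> i (LEAST k. k < m \<and> t < \<tau> (\<sigma> i k)))
      else None)"

definition sg_amount ::
  "nat \<Rightarrow> (nat \<Rightarrow> real \<Rightarrow> real) \<Rightarrow> (nat \<Rightarrow> nat \<Rightarrow> nat) \<Rightarrow> (nat \<Rightarrow> real)
     \<Rightarrow> nat \<Rightarrow> nat \<Rightarrow> real \<Rightarrow> real" where
  "sg_amount m \<eta> \<sigma> \<tau> i j t =
     set_lebesgue_integral lborel {0..t}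
       (\<lambda>s. if sg_current m \<sigma> \<tau> i s = Some j then \<eta> i s else 0)"

definition sg_run ::
  "nat \<Rightarrow> nat \<Rightarrow> (nat \<Rightarrow> real) \<Rightarrow> (nat \<Rightarrow> real \<Rightarrow> real) \<Rightarrow> (nat \<Rightarrow> nat \<Rightarrow> nat)
     \<Rightarrow> (nat \<Rightarrow> real) \<Rightarrow> bool" where
  "sg_run n m q \<eta> \<sigma> \<tau> \<longleftrightarrow>
     (\<forall>j<m. 0 \<le> \<tau> j \<and> \<tau> j \<le> 1 \<and>
        (\<Sum>i<n. sg_amount m \<eta> \<sigma> \<tau> i j (\<tau> j)) = q j \<and>
        (\<forall>t. 0 \<le> t \<and> t < \<tau> j \<longrightarrow> (\<Sum>i<n. sg_amount m \<eta> \<sigma> \<tau> i j t) < q j))"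

definition sg_produces ::
  "nat \<Rightarrow> nat \<Rightarrow> (nat \<Rightarrow> real) \<Rightarrow> (nat \<Rightarrow> real \<Rightarrow> real) \<Rightarrow> (nat \<Rightarrow> nat \<Rightarrow> nat)
     \<Rightarrow> (nat \<Rightarrow> nat \<Rightarrow> real) \<Rightarrow> bool" where
  "sg_produces n m q \<eta> \<sigma> a \<longleftrightarrow>
     (\<exists>\<tau>. sg_run n m q \<eta> \<sigma> \<tau>) \<and>
     (\<forall>\<tau>. sg_run n m q \<eta> \<sigma> \<tau> \<longrightarrow>
        (\<forall>i<n. \<forall>j<m. sg_amount m \<eta> \<sigma> \<tau> i j 1 = a i j))"

end

(*
  Pareto efficiency makes the precedence relation on goods acyclic, where x precedes y if some
  agent receiving part of y prefers x: a cycle of precedences is a trading cycle along which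
  every participating agent gains lexicographically. Let depth j be the number of goods that
  precede j (transitively). Split [0, 1] into m slots of length 1/m and let agent i eat good j at
  rate m * a i j during slot depth j. An agent holding j then has nothing left of the goods it
  prefers once that slot begins, and by induction on k every run exhausts each good of depth k
  exactly at the end of slot k; hence the mechanism hands out exactly a.
*)
theory Submission
  imports Defs
begin

text \<open>Along a closed walk f 0, ..., f N = f 0 of goods, agent t gives up one unit of
  f (Suc t) in exchange for one unit of f t.\<close>
definition cycle_trade :: "nat \<Rightarrow> (nat \<Rightarrow> nat) \<Rightarrow> (nat \<Rightarrow> nat) \<Rightarrow> nat \<Rightarrow> nat \<Rightarrow> real" where
  "cycle_trade N agent f i j =
     (\<Sum>t<N. if agent t = i then (if j = f t then 1 else 0) - (if j = f (Suc t) then 1 else 0) else 0)"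

lemma cycle_trade_row_sum:
  assumes "\<And>t. t < N \<Longrightarrow> f t < m \<and> f (Suc t) < m"
  shows "(\<Sum>j<m. cycle_trade N agent f i j) = 0"
proof -
  have "(\<Sum>j<m. cycle_trade N agent f i j) =
      (\<Sum>t<N. \<Sum>j<m. if agent t = i then (if j = f t then 1 else 0) - (if j = f (Suc t) then 1 else 0) else 0)"
    unfolding cycle_trade_def by (rule sum.swap)
  also have "\<dots> = 0"
  proof (rule sum.neutral, intro ballI)
    fix t assume "t \<in> {..<N}"
    with assms have "f t < m" "f (Suc t) < m" by auto
    then show "(\<Sum>j<m. if agent t = i then (if j = f t then 1 else 0) - (if j = f (Suc t) then 1 else 0) else 0) = (0::real)"
      by (cases "agent t = i") (simp_all add: sum_subtractf)
  qed
  finally show ?thesis .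
qed

lemma cycle_trade_col_sum:
  assumes "\<And>t. t < N \<Longrightarrow> agent t < n" and "f N = f 0"
  shows "(\<Sum>i<n. cycle_trade N agent f i j) = 0"
proof -
  have "(\<Sum>i<n. cycle_trade N agent f i j) =
      (\<Sum>t<N. \<Sum>i<n. if agent t = i then (if j = f t then 1 else 0) - (if j = f (Suc t) then 1 else 0) else 0)"
    unfolding cycle_trade_def by (rule sum.swap)
  also have "\<dots> = - (\<Sum>t<N. (if j = f (Suc t) then 1 else 0) - (if j = f t then 1 else 0))"
    using assms(1) by (simp add: sum_negf[symmetric])
  also have "\<dots> = 0"
    using assms(2) by (subst sum_lessThan_telescope) simp
  finally show ?thesis .
qed

lemma cycle_trade_lower_bound: "- real N \<le> cycle_trade N agent f i j"
proof -
  have "(\<Sum>t<N. (-1::real)) \<le> cycle_trade N agent f i j"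
    unfolding cycle_trade_def by (intro sum_mono) auto
  then show ?thesis by simp
qed

lemma cycle_trade_negD:
  assumes "cycle_trade N agent f i j < 0"
  shows "\<exists>t<N. agent t = i \<and> j = f (Suc t)"
proof (rule ccontr)
  assume "\<not> ?thesis"
  then have "0 \<le> cycle_trade N agent f i j"
    unfolding cycle_trade_def by (intro sum_nonneg) auto
  with assms show False by simp
qed

lemma cycle_trade_perturb_nonneg:
  assumes "0 \<le> x" "0 \<le> \<delta>"
    and giver: "\<And>t. t < N \<Longrightarrow> agent t = i \<Longrightarrow> j = f (Suc t) \<Longrightarrow> \<delta> \<le> x"
  shows "0 \<le> x + \<delta> / real N * cycle_trade N agent f i j"
proof (cases "0 \<le> cycle_trade N agent f i j")
  case True
  then show ?thesis using assms(1,2) by simp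
next
  case False
  then obtain t where t: "t < N" "agent t = i" "j = f (Suc t)"
    using cycle_trade_negD[of N agent f i j] by auto
  have "- \<delta> \<le> \<delta> / real N * cycle_trade N agent f i j"
    using mult_left_mono[OF cycle_trade_lower_bound[of N agent f i j], of "\<delta> / real N"] assms(2) t(1)
    by simp
  with giver[OF t] show ?thesis by linarith
qed

lemma cycle_trade_idle: "i \<notin> agent ` {..<N} \<Longrightarrow> cycle_trade N agent f i j = 0"
  unfolding cycle_trade_def by (intro sum.neutral) auto

lemma cycle_trade_lex_positive:
  fixes lo hi :: "nat \<Rightarrow> nat"
  assumes p: "inj_on p {..<m}"
    and steps: "\<And>t. t < N \<Longrightarrow> agent t = i \<Longrightarrow>
                  lo t < hi t \<and> hi t < m \<and> p (lo t) = f t \<and> p (hi t) = f (Suc t)"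
    and active: "t0 < N" "agent t0 = i"
  shows "\<exists>l<m. (\<forall>k<l. cycle_trade N agent f i (p k) = 0) \<and> 0 < cycle_trade N agent f i (p l)"
proof -
  define S where "S = {t. t < N \<and> agent t = i}"
  have S: "finite S" "t0 \<in> S" unfolding S_def using active by auto
  define L where "L = Min (lo ` S)"
  have "L \<in> lo ` S" unfolding L_def using S by (intro Min_in) auto
  then obtain t1 where t1: "t1 \<in> S" "lo t1 = L" by auto
  have L_le: "L \<le> lo t" if "t \<in> S" for t
    unfolding L_def using S that by simp
  have step: "lo t < hi t" "hi t < m" "p (lo t) = f t" "p (hi t) = f (Suc t)" if "t \<in> S" for t
    using steps that unfolding S_def by auto
  have L_m: "L < m" using step[OF t1(1)] t1(2) by simp
  have not_given: "p k \<noteq> f (Suc t)" if "k \<le> L" "t \<in> S" for k t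
  proof
    assume "p k = f (Suc t)"
    then have "k = hi t" using p step[OF that(2)] that(1) L_m
      by (metis inj_on_def le_less_trans lessThan_iff)
    then show False using L_le[OF that(2)] step(1)[OF that(2)] that(1) by simp
  qed
  have not_taken: "p k \<noteq> f t" if "k < L" "t \<in> S" for k t
  proof
    assume "p k = f t"
    then have "k = lo t" using p step[OF that(2)] that(1) L_m
      by (metis inj_on_def less_trans lessThan_iff)
    then show False using L_le[OF that(2)] that(1) by simp
  qed
  have "cycle_trade N agent f i (p k) = 0" if "k < L" for k
    unfolding cycle_trade_def
    using not_given[of k] not_taken[OF that] that by (intro sum.neutral) (auto simp: S_def)
  moreover have "0 < cycle_trade N agent f i (p L)"
  proof -
    have "cycle_trade N agent f i (p L) = (\<Sum>t<N. of_bool (agent t = i \<and> p L = f t))"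
      unfolding cycle_trade_def using not_given[of L] by (intro sum.cong) (auto simp: S_def)
    also have "\<dots> \<ge> of_bool (agent t1 = i \<and> p L = f t1)"
      using t1(1) by (intro member_le_sum) (auto simp: S_def)
    finally show ?thesis using t1 step(3)[OF t1(1)] by (auto simp: S_def)
  qed
  ultimately show ?thesis using L_m by blast
qed

lemma lex_prefers_perturb:
  assumes "l < m" "\<forall>k<l. d (p k) = 0" "0 < d (p l)" "0 < c"
  shows "lex_prefers m p (\<lambda>j. x j + c * d j) x"
  unfolding lex_prefers_def using assms by auto

lemma is_allocation_perturb:
  assumes "is_allocation n m q r a"
    and "\<forall>i<n. \<forall>j<m. 0 \<le> a i j + c * d i j"
    and "\<forall>i. (\<Sum>j<m. d i j) = 0" and "\<forall>j. (\<Sum>i<n. d i j) = 0"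
  shows "is_allocation n m q r (\<lambda>i j. a i j + c * d i j)"
  using assms unfolding is_allocation_def by (simp add: sum.distrib sum_distrib_left[symmetric])

lemma measure_Ico_inter_Ico:
  fixes t u v :: real
  assumes "0 \<le> u" "u \<le> v"
  shows "measure lborel ({0..<t} \<inter> {u..<v}) = min v (max u t) - u"
proof -
  have "{0..<t} \<inter> {u..<v} = {u..<min v (max u t)}" using assms by auto
  then show ?thesis using assms by simp
qed

locale efficient_allocation =
  fixes n m :: nat and q r :: "nat \<Rightarrow> real" and \<pi> :: "nat \<Rightarrow> nat \<Rightarrow> nat"
    and a :: "nat \<Rightarrow> nat \<Rightarrow> real"
  assumes supply_pos: "\<forall>j<m. q j > 0"
    and pref_lists: "\<forall>i<n. is_pref_list m (\<pi> i)"
    and efficient: "pareto_efficient n m q r \<pi> a"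
begin

lemma allocation: "is_allocation n m q r a"
  using efficient unfolding pareto_efficient_def by blast

lemma share_nonneg: "i < n \<Longrightarrow> j < m \<Longrightarrow> 0 \<le> a i j"
  using allocation unfolding is_allocation_def by blast

lemma pref_bij: "i < n \<Longrightarrow> bij_betw (\<pi> i) {..<m} {..<m}"
  using pref_lists unfolding is_pref_list_def by blast

lemma pref_less: "i < n \<Longrightarrow> l < m \<Longrightarrow> \<pi> i l < m"
  using pref_bij bij_betwE by blast

lemma pref_inj: "i < n \<Longrightarrow> inj_on (\<pi> i) {..<m}"
  using pref_bij bij_betw_def by blast

lemma pref_surj: "i < n \<Longrightarrow> j < m \<Longrightarrow> \<exists>l<m. \<pi> i l = j"
  using pref_bij[THEN bij_betw_imp_surj_on] by (metis imageE lessThan_iff)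

definition precedence :: "(nat \<times> nat) set" where
  "precedence = {(x, y). \<exists>i<n. \<exists>l' l. l' < l \<and> l < m \<and> \<pi> i l' = x \<and> \<pi> i l = y \<and> 0 < a i y}"

lemma precedence_cycle:
  assumes "(x, x) \<in> precedence\<^sup>+"
  obtains N f agent lo hi where "0 < N" "f 0 = x" "f N = x"
    "\<And>t. t < N \<Longrightarrow> agent t < n \<and> lo t < hi t \<and> hi t < m \<and>
       \<pi> (agent t) (lo t) = f t \<and> \<pi> (agent t) (hi t) = f (Suc t) \<and> 0 < a (agent t) (f (Suc t))"
proof -
  obtain N where N: "0 < N" "(x, x) \<in> precedence ^^ N"
    using assms trancl_power by blast
  then obtain f where f: "f 0 = x" "f N = x" "\<And>t. t < N \<Longrightarrow> (f t, f (Suc t)) \<in> precedence"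
    using relpow_fun_conv by metis
  have "\<exists>i l' l. i < n \<and> l' < l \<and> l < m \<and>
      \<pi> i l' = f t \<and> \<pi> i l = f (Suc t) \<and> 0 < a i (f (Suc t))" if "t < N" for t
    using f(3)[OF that] unfolding precedence_def by simp
  then obtain agent lo hi where "\<And>t. t < N \<Longrightarrow> agent t < n \<and> lo t < hi t \<and> hi t < m \<and>
      \<pi> (agent t) (lo t) = f t \<and> \<pi> (agent t) (hi t) = f (Suc t) \<and> 0 < a (agent t) (f (Suc t))"
    by metis
  with N f that show ?thesis by blast
qed

lemma precedence_acyclic: "(x, x) \<notin> precedence\<^sup>+"
proof
  assume "(x, x) \<in> precedence\<^sup>+"
  then obtain N f agent lo hi where N: "0 < N" and f: "f 0 = x" "f N = x"
    and step: "\<And>t. t < N \<Longrightarrow> agent t < n \<and> lo t < hi t \<and> hi t < m \<and>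
       \<pi> (agent t) (lo t) = f t \<and> \<pi> (agent t) (hi t) = f (Suc t) \<and> 0 < a (agent t) (f (Suc t))"
    by (rule precedence_cycle) blast
  define D where "D = cycle_trade N agent f"
  define \<delta> where "\<delta> = Min ((\<lambda>t. a (agent t) (f (Suc t))) ` {..<N})"
  define \<epsilon> where "\<epsilon> = \<delta> / real N"
  define b where "b i j = a i j + \<epsilon> * D i j" for i j
  have \<delta>_pos: "0 < \<delta>" unfolding \<delta>_def using N step by (subst Min_gr_iff) auto
  have \<epsilon>_pos: "0 < \<epsilon>" unfolding \<epsilon>_def using \<delta>_pos N by simp
  have goods: "f t < m \<and> f (Suc t) < m" if "t < N" for t
    using step[OF that] pref_less by (metis order.strict_trans)
  have b_nonneg: "0 \<le> b i j" if "i < n" "j < m" for i j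
    unfolding b_def \<epsilon>_def D_def
    using share_nonneg[OF that] \<delta>_pos by (intro cycle_trade_perturb_nonneg) (auto simp: \<delta>_def)
  have "is_allocation n m q r b"
    unfolding b_def using allocation b_nonneg[unfolded b_def]
    by (intro is_allocation_perturb)
       (auto simp: D_def goods step f intro!: cycle_trade_row_sum cycle_trade_col_sum)
  moreover have improves: "lex_prefers m (\<pi> i) (b i) (a i)" if t0: "t0 < N" "agent t0 = i" for i t0
  proof -
    have i: "i < n" using step t0 by blast
    have moves: "lo t < hi t \<and> hi t < m \<and> \<pi> i (lo t) = f t \<and> \<pi> i (hi t) = f (Suc t)"
      if "t < N" "agent t = i" for t
      using step[OF that(1)] that(2) by blast
    obtain l where "l < m" "\<forall>k<l. D i (\<pi> i k) = 0" "0 < D i (\<pi> i l)"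
      unfolding D_def using cycle_trade_lex_positive[where agent = agent and f = f, OF pref_inj[OF i] moves t0] by blast
    then show ?thesis unfolding b_def using \<epsilon>_pos by (intro lex_prefers_perturb)
  qed
  moreover have "same_share m (b i) (a i) \<or> lex_prefers m (\<pi> i) (b i) (a i)" for i
  proof (cases "i \<in> agent ` {..<N}")
    case True
    then show ?thesis using improves by blast
  next
    case False
    then show ?thesis unfolding same_share_def b_def D_def using cycle_trade_idle by simp
  qed
  moreover have "agent 0 < n" using step[OF N] by blast
  ultimately show False
    using efficient improves[OF N refl] unfolding pareto_efficient_def by blast
qed

definition predecessors :: "nat \<Rightarrow> nat set" where
  "predecessors y = {x. (x, y) \<in> precedence\<^sup>+}"

definition depth :: "nat \<Rightarrow> nat" where
  "depth y = card (predecessors y)"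

lemma precedence_less: "(x, y) \<in> precedence \<Longrightarrow> x < m \<and> y < m"
  unfolding precedence_def using pref_less by auto

lemma predecessors_subset: "predecessors y \<subseteq> {..<m} - {y}"
  unfolding predecessors_def using precedence_acyclic
  by (auto dest: tranclD precedence_less)

lemma depth_less: "y < m \<Longrightarrow> depth y < m"
proof -
  assume "y < m"
  then have "card (predecessors y) \<le> m - 1"
    using card_mono[OF _ predecessors_subset[of y]] by simp
  with \<open>y < m\<close> show ?thesis unfolding depth_def by linarith
qed

lemma depth_strict_mono: "(x, y) \<in> precedence \<Longrightarrow> depth x < depth y"
proof -
  assume xy: "(x, y) \<in> precedence"
  have "predecessors x \<subseteq> predecessors y"
    unfolding predecessors_def using xy by (auto intro: trancl_into_trancl)
  moreover have "x \<in> predecessors y" "x \<notin> predecessors x"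
    unfolding predecessors_def using xy precedence_acyclic by auto
  moreover have "finite (predecessors y)"
    using predecessors_subset finite_subset by blast
  ultimately show ?thesis unfolding depth_def by (metis psubsetI psubset_card_mono)
qed

lemma depth_less_if_preferred:
  assumes "i < n" "0 < a i g" "l < m" "\<pi> i l = g" "k < l"
  shows "depth (\<pi> i k) < depth g"
  using assms by (intro depth_strict_mono) (auto simp: precedence_def)

lemma held_goods_depth_inj:
  assumes "i < n" "g < m" "g' < m" "0 < a i g" "0 < a i g'" "depth g = depth g'"
  shows "g = g'"
proof -
  obtain l l' where "l < m" "\<pi> i l = g" "l' < m" "\<pi> i l' = g'"
    using pref_surj assms by metis
  then show ?thesis
    using depth_less_if_preferred[of i g l] depth_less_if_preferred[of i g' l'] assms
    by (metis less_irrefl nat_neq_iff)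
qed

definition slot :: "nat \<Rightarrow> real set" where
  "slot k = {real k / real m ..< (real k + 1) / real m}"

definition speed :: "nat \<Rightarrow> real \<Rightarrow> real" where
  "speed i s = (\<Sum>j<m. real m * a i j * indicator (slot (depth j)) s)"

definition exhaustion_time :: "nat \<Rightarrow> real" where
  "exhaustion_time j = (real (depth j) + 1) / real m"

definition on_schedule :: "(nat \<Rightarrow> real) \<Rightarrow> real \<Rightarrow> bool" where
  "on_schedule \<tau> s \<longleftrightarrow> (\<forall>k<m. s \<in> slot k \<longrightarrow>
     (\<forall>j<m. depth j < k \<longrightarrow> \<tau> j \<le> s) \<and> (\<forall>j<m. depth j = k \<longrightarrow> s < \<tau> j))"

lemma slot_iff: "s \<in> slot k \<longleftrightarrow> 0 < m \<and> real k \<le> s * real m \<and> s * real m < real k + 1"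
  unfolding slot_def by (cases "m = 0") (auto simp: field_simps)

lemma slot_unique: "s \<in> slot k \<Longrightarrow> s \<in> slot k' \<Longrightarrow> k = k'"
  unfolding slot_iff by linarith

lemma current_good_held:
  assumes i: "i < n" and g: "g < m" "0 < a i g" and s: "s \<in> slot (depth g)"
    and schedule: "on_schedule \<tau> s"
  shows "sg_current m \<pi> \<tau> i s = Some g"
proof -
  obtain l where l: "l < m" "\<pi> i l = g" using pref_surj i g by blast
  have available: "s < \<tau> g" using schedule s depth_less g unfolding on_schedule_def by blast
  have exhausted: "\<tau> (\<pi> i k) \<le> s" if "k < l" for k
    using schedule s depth_less[OF g(1)] depth_less_if_preferred[OF i g(2) l that] pref_less i that l
    unfolding on_schedule_def by (meson order.strict_trans)
  have "(LEAST k. k < m \<and> s < \<tau> (\<pi> i k)) = l"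
    using l available exhausted by (intro Least_equality) (auto simp: not_less[symmetric])
  then show ?thesis unfolding sg_current_def using l available by auto
qed

lemma share_indicator_other:
  assumes "i < n" "g < m" "0 < a i g" "s \<in> slot (depth g)" "j < m" "j \<noteq> g"
  shows "a i j * indicator (slot (depth j)) s = 0"
proof (cases "s \<in> slot (depth j)")
  case True
  then have "depth j = depth g" using assms slot_unique by blast
  then have "\<not> 0 < a i j" using held_goods_depth_inj assms by metis
  then show ?thesis using share_nonneg assms by force
qed simp

lemma speed_held:
  assumes "i < n" "g < m" "0 < a i g" "s \<in> slot (depth g)"
  shows "speed i s = real m * a i g"
proof -
  have "speed i s = (\<Sum>j<m. if j = g then real m * a i g else 0)"
    unfolding speed_def using share_indicator_other[OF assms] assms(4)
    by (intro sum.cong) auto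
  then show ?thesis using assms(2) by simp
qed

lemma eating_rate:
  assumes i: "i < n" and j: "j < m" and schedule: "on_schedule \<tau> s"
  shows "(if sg_current m \<pi> \<tau> i s = Some j then speed i s else 0) =
    real m * a i j * indicator (slot (depth j)) s"
proof (cases "\<exists>g<m. 0 < a i g \<and> s \<in> slot (depth g)")
  case True
  then obtain g where g: "g < m" "0 < a i g" "s \<in> slot (depth g)" by blast
  show ?thesis
    using current_good_held[OF i g schedule] speed_held[OF i g] share_indicator_other[OF i g j] g
    by (cases "j = g") auto
next
  case False
  then have idle: "a i g * indicator (slot (depth g)) s = 0" if "g < m" for g
    using share_nonneg[OF i that] that by (cases "s \<in> slot (depth g)") force+
  then have "speed i s = 0" unfolding speed_def by (intro sum.neutral ballI) (simp add: mult.assoc)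
  then show ?thesis using idle[OF j] by simp
qed

lemma amount_on_schedule:
  assumes i: "i < n" and j: "j < m" and schedule: "\<And>s. 0 \<le> s \<Longrightarrow> s < t \<Longrightarrow> on_schedule \<tau> s"
  shows "sg_amount m speed \<pi> \<tau> i j t = real m * a i j * measure lborel ({0..<t} \<inter> slot (depth j))"
proof -
  define f where "f s = (if sg_current m \<pi> \<tau> i s = Some j then speed i s else 0)" for s
  define c where "c = real m * a i j"
  define d where "d = (if 0 \<le> t then f t else 0)"
  define S where "S = {0..<t} \<inter> slot (depth j)"
  have S_finite: "emeasure lborel S < \<infinity>"
  proof -
    have "emeasure lborel S \<le> emeasure lborel {0..t}"
      by (rule emeasure_mono) (auto simp: S_def)
    also have "\<dots> < \<infinity>" by (simp add: emeasure_lborel_Icc_eq)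
    finally show ?thesis .
  qed
  \<comment> \<open>The schedule says nothing about the endpoint t itself, but a point is a null set.\<close>
  have "(\<lambda>s. indicator {0..t} s *\<^sub>R f s) = (\<lambda>s. c * indicator S s + d * indicator {t} s)"
  proof
    fix s
    show "indicator {0..t} s *\<^sub>R f s = c * indicator S s + d * indicator {t} s"
      using eating_rate[OF i j schedule, of s]
      by (cases "s \<in> {0..<t}") (auto simp: f_def c_def d_def S_def indicator_def)
  qed
  then have "sg_amount m speed \<pi> \<tau> i j t = integral\<^sup>L lborel (\<lambda>s. c * indicator S s + d * indicator {t} s)"
    unfolding sg_amount_def set_lebesgue_integral_def f_def[symmetric] by simp
  also have "\<dots> = c * measure lborel S"
    using S_finite by (simp add: S_def slot_def)
  finally show ?thesis unfolding c_def S_def .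
qed

lemma total_amount_on_schedule:
  assumes j: "j < m" and schedule: "\<And>s. 0 \<le> s \<Longrightarrow> s < t \<Longrightarrow> on_schedule \<tau> s"
  shows "(\<Sum>i<n. sg_amount m speed \<pi> \<tau> i j t) = real m * q j * measure lborel ({0..<t} \<inter> slot (depth j))"
proof -
  let ?c = "real m * measure lborel ({0..<t} \<inter> slot (depth j))"
  have "(\<Sum>i<n. sg_amount m speed \<pi> \<tau> i j t) = (\<Sum>i<n. ?c * a i j)"
    using amount_on_schedule[OF _ j schedule] by (intro sum.cong) (auto simp: mult_ac)
  also have "\<dots> = ?c * q j"
    using allocation j unfolding is_allocation_def by (simp add: sum_distrib_left[symmetric])
  finally show ?thesis by (simp add: mult_ac)
qed

lemma measure_before_slot:
  assumes "0 < m"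
  shows "measure lborel ({0..<t} \<inter> slot k) =
    min ((real k + 1) / real m) (max (real k / real m) t) - real k / real m"
  unfolding slot_def using assms by (intro measure_Ico_inter_Ico) (auto simp: divide_right_mono)

lemma exhaustion_time_nonneg: "0 \<le> exhaustion_time j"
  unfolding exhaustion_time_def by simp

lemma exhaustion_time_le_one: "j < m \<Longrightarrow> exhaustion_time j \<le> 1"
  using depth_less[of j] unfolding exhaustion_time_def by (simp add: field_simps)

lemma measure_before_slot_full:
  assumes "j < m" "exhaustion_time j \<le> t"
  shows "measure lborel ({0..<t} \<inter> slot (depth j)) = 1 / real m"
proof -
  have m: "0 < m" using assms(1) by simp
  show ?thesis
    using assms(2) m unfolding measure_before_slot[OF m] exhaustion_time_def
    by (simp add: min_def max_def field_simps)
qed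

lemma measure_before_slot_partial:
  assumes "j < m" "t < exhaustion_time j"
  shows "measure lborel ({0..<t} \<inter> slot (depth j)) < 1 / real m"
proof -
  have m: "0 < m" using assms(1) by simp
  show ?thesis
    using assms(2) m unfolding measure_before_slot[OF m] exhaustion_time_def
    by (auto simp: min_def max_def add_divide_distrib)
qed

lemma total_amount_full:
  assumes j: "j < m" and schedule: "\<And>s. 0 \<le> s \<Longrightarrow> s < t \<Longrightarrow> on_schedule \<tau> s"
    and t: "exhaustion_time j \<le> t"
  shows "(\<Sum>i<n. sg_amount m speed \<pi> \<tau> i j t) = q j"
  using total_amount_on_schedule[OF j schedule] measure_before_slot_full[OF j t] j by simp

lemma total_amount_partial:
  assumes j: "j < m" and schedule: "\<And>s. 0 \<le> s \<Longrightarrow> s < t \<Longrightarrow> on_schedule \<tau> s"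
    and t: "t < exhaustion_time j"
  shows "(\<Sum>i<n. sg_amount m speed \<pi> \<tau> i j t) < q j"
proof -
  have m: "0 < real m" using j by simp
  have "real m * q j * measure lborel ({0..<t} \<inter> slot (depth j)) < real m * q j * (1 / real m)"
    using measure_before_slot_partial[OF j t] m supply_pos j by (intro mult_strict_left_mono) auto
  then show ?thesis using m total_amount_on_schedule[OF j schedule] by simp
qed

lemma exhaustion_time_on_schedule: "on_schedule exhaustion_time s"
  unfolding on_schedule_def
proof (intro allI impI conjI)
  fix k j assume k: "k < m" "s \<in> slot k" and j: "j < m" "depth j < k"
  have "exhaustion_time j \<le> real k / real m"
    using j unfolding exhaustion_time_def by (simp add: divide_right_mono)
  also have "\<dots> \<le> s" using k unfolding slot_def by auto
  finally show "exhaustion_time j \<le> s" .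
next
  fix k j assume "k < m" "s \<in> slot k" "j < m" "depth j = k"
  then show "s < exhaustion_time j" unfolding exhaustion_time_def slot_def by auto
qed

lemma on_schedule_before:
  assumes lower: "\<forall>j<m. depth j < k \<longrightarrow> \<tau> j = exhaustion_time j"
    and current: "\<forall>j<m. depth j = k \<longrightarrow> t \<le> \<tau> j"
    and t: "t \<le> (real k + 1) / real m" and s: "0 \<le> s" "s < t"
  shows "on_schedule \<tau> s"
  unfolding on_schedule_def
proof (intro allI impI)
  fix k' assume k': "k' < m" "s \<in> slot k'"
  have m: "0 < real m" using k' by simp
  have "s * real m < t * real m" using s m by simp
  also have "\<dots> \<le> real k + 1" using t m by (simp add: field_simps)
  finally have "s * real m < real k + 1" .
  then have "k' \<le> k" using k' by (auto simp: slot_iff)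
  then show "(\<forall>j<m. depth j < k' \<longrightarrow> \<tau> j \<le> s) \<and> (\<forall>j<m. depth j = k' \<longrightarrow> s < \<tau> j)"
    using exhaustion_time_on_schedule[of s] k' lower current s
    unfolding on_schedule_def by (metis le_neq_implies_less less_le_trans order.strict_trans2)
qed

lemma exhaustion_time_run: "sg_run n m q speed \<pi> exhaustion_time"
  unfolding sg_run_def
proof (intro allI impI conjI)
  fix j assume j: "j < m"
  show "0 \<le> exhaustion_time j" by (rule exhaustion_time_nonneg)
  show "exhaustion_time j \<le> 1" using exhaustion_time_le_one[OF j] .
  show "(\<Sum>i<n. sg_amount m speed \<pi> exhaustion_time i j (exhaustion_time j)) = q j"
    using j exhaustion_time_on_schedule by (intro total_amount_full) auto
  fix t assume "0 \<le> t \<and> t < exhaustion_time j"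
  then show "(\<Sum>i<n. sg_amount m speed \<pi> exhaustion_time i j t) < q j"
    using j exhaustion_time_on_schedule by (intro total_amount_partial) auto
qed

lemma run_no_early_exhaustion:
  assumes run: "sg_run n m q speed \<pi> \<tau>"
    and lower: "\<forall>j<m. depth j < k \<longrightarrow> \<tau> j = exhaustion_time j"
  shows "\<forall>j<m. depth j = k \<longrightarrow> (real k + 1) / real m \<le> \<tau> j"
proof (rule ccontr)
  assume "\<not> ?thesis"
  then obtain g where g: "g < m" "depth g = k" "\<tau> g < (real k + 1) / real m" by force
  define S where "S = {j. j < m \<and> depth j = k}"
  have S: "finite S" "g \<in> S" unfolding S_def using g by auto
  have "Min (\<tau> ` S) \<in> \<tau> ` S" using S by (intro Min_in) auto
  then obtain g0 where g0: "g0 \<in> S" "\<tau> g0 = Min (\<tau> ` S)" by auto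
  have first: "\<forall>j<m. depth j = k \<longrightarrow> \<tau> g0 \<le> \<tau> j"
    using g0(2) S(1) unfolding S_def by auto
  have early: "\<tau> g0 < (real k + 1) / real m"
    using first g by fastforce
  have g0_depth: "g0 < m" "depth g0 = k" using g0(1) unfolding S_def by auto
  have "(\<Sum>i<n. sg_amount m speed \<pi> \<tau> i g0 (\<tau> g0)) < q g0"
    using early g0_depth on_schedule_before[OF lower first]
    by (intro total_amount_partial) (auto simp: exhaustion_time_def)
  then show False using run g0_depth unfolding sg_run_def by auto
qed

lemma run_exhaustion_time:
  assumes run: "sg_run n m q speed \<pi> \<tau>"
  shows "j < m \<Longrightarrow> \<tau> j = exhaustion_time j"
proof (induction "depth j" arbitrary: j rule: less_induct)
  case less
  let ?k = "depth j"
  have lower: "\<forall>j'<m. depth j' < ?k \<longrightarrow> \<tau> j' = exhaustion_time j'"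
    using less.hyps by blast
  have late: "exhaustion_time j \<le> \<tau> j"
    using run_no_early_exhaustion[OF run lower] less.prems unfolding exhaustion_time_def by blast
  have schedule: "on_schedule \<tau> s" if "0 \<le> s" "s < exhaustion_time j" for s
    using on_schedule_before[OF lower run_no_early_exhaustion[OF run lower]] that
    unfolding exhaustion_time_def by auto
  have "(\<Sum>i<n. sg_amount m speed \<pi> \<tau> i j (exhaustion_time j)) = q j"
    using less.prems schedule by (intro total_amount_full) auto
  then have "\<not> exhaustion_time j < \<tau> j"
    using run less.prems exhaustion_time_nonneg[of j] unfolding sg_run_def by fastforce
  with late show ?case by simp
qed

lemma mechanism_produces: "sg_produces n m q speed \<pi> a"
  unfolding sg_produces_def
proof (intro conjI allI impI)
  show "\<exists>\<tau>. sg_run n m q speed \<pi> \<tau>" using exhaustion_time_run by blast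
  fix \<tau> i j assume run: "sg_run n m q speed \<pi> \<tau>" and i: "i < n" and j: "j < m"
  have "on_schedule \<tau> s" for s
    using exhaustion_time_on_schedule[of s] run_exhaustion_time[OF run]
    unfolding on_schedule_def by simp
  then have "sg_amount m speed \<pi> \<tau> i j 1 = real m * a i j * measure lborel ({0..<1} \<inter> slot (depth j))"
    using amount_on_schedule[OF i j] by blast
  also have "measure lborel ({0..<1} \<inter> slot (depth j)) = 1 / real m"
    using measure_before_slot_full[OF j exhaustion_time_le_one[OF j]] .
  finally show "sg_amount m speed \<pi> \<tau> i j 1 = a i j" using j by simp
qed

lemma speed_function_speed:
  assumes i: "i < n"
  shows "speed_function (speed i) (r i)"
proof -
  have slot_measure: "emeasure lborel (slot (depth j)) = ennreal (1 / real m)" if "j < m" for j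
    using that unfolding slot_def by (simp add: diff_divide_distrib[symmetric] divide_right_mono)
  have slot_unit: "slot (depth j) \<subseteq> {0..1}" if "j < m" for j
  proof -
    have "slot (depth j) \<subseteq> {real (depth j) / real m .. (real (depth j) + 1) / real m}"
      unfolding slot_def by auto
    also have "\<dots> \<subseteq> {0..1}"
      using exhaustion_time_le_one[OF that] unfolding exhaustion_time_def by simp
    finally show ?thesis .
  qed
  have restrict: "(\<lambda>s. indicator {0..1} s *\<^sub>R speed i s) = speed i"
  proof
    fix s
    show "indicator {0..1} s *\<^sub>R speed i s = speed i s"
    proof (cases "s \<in> {0..1}")
      case False
      then have "s \<notin> slot (depth j)" if "j < m" for j
        using slot_unit[OF that] by blast
      then have "speed i s = 0" unfolding speed_def by (intro sum.neutral) auto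
      then show ?thesis by simp
    qed simp
  qed
  have terms: "integrable lborel (\<lambda>s. real m * a i j * indicator (slot (depth j)) s)" if "j < m" for j
    using slot_measure[OF that] by (intro integrable_mult_right integrable_real_indicator) (auto simp: slot_def)
  have "integrable lborel (speed i)"
    unfolding speed_def using terms by (intro Bochner_Integration.integrable_sum) auto
  moreover have "integral\<^sup>L lborel (speed i) = (\<Sum>j<m. a i j)"
    unfolding speed_def using terms slot_measure
    by (subst Bochner_Integration.integral_sum) (auto simp: measure_def intro!: sum.cong)
  moreover have "(\<Sum>j<m. a i j) = r i" using allocation i unfolding is_allocation_def by blast
  ultimately show ?thesis
    unfolding speed_function_def set_integrable_def set_lebesgue_integral_def restrict
    using share_nonneg[OF i] by (auto simp: speed_def intro!: sum_nonneg)
qed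

end

theorem theorem6:
  fixes n m :: nat and q r :: "nat \<Rightarrow> real" and \<pi> :: "nat \<Rightarrow> nat \<Rightarrow> nat"
    and a :: "nat \<Rightarrow> nat \<Rightarrow> real"
  assumes "\<forall>j<m. q j > 0"
    and "\<forall>i<n. r i > 0"
    and "(\<Sum>j<m. q j) = (\<Sum>i<n. r i)"
    and "\<forall>i<n. is_pref_list m (\<pi> i)"
    and "pareto_efficient n m q r \<pi> a"
  shows "\<exists>\<eta> :: nat \<Rightarrow> real \<Rightarrow> real.
           (\<forall>i<n. speed_function (\<eta> i) (r i)) \<and> sg_produces n m q \<eta> \<pi> a"
proof -
  interpret efficient_allocation n m q r \<pi> a
    using assms by unfold_locales auto
  show ?thesis using speed_function_speed mechanism_produces by blast
qed

end
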